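(* Consider the consistent-read asynchronous iteration defined in the context with step size $0<\beta\le1$, an arbitrary deterministic starting vector $x_0$, a nonnegative integer $\tau$, and deterministic delay indices $k(j)$ satisfying $j-\tau\le k(j)\le j$. Let $\rho=\max_{l}\frac1n\sum_{r=1}^n|A_{lr}|$ and $\nu_\tau(\beta)=2\beta-\beta^2-2\rho\tau\beta^2$, and suppose $\nu_\tau(\beta)>0$. Then: (a) For every integer $m\ge \frac{\log(1/2)}{\log(1-\lambda_{\max}/n)}$, \[E_m\le\Big(1-\frac{\nu_\tau(\beta)}{2\kappa}\Big)E_0.\] (b) Let $T_0=\big\lceil \frac{\log(1/2)}{\log(1-\lambda_{\max}/n)}\big\rceil$, $T=T_0+\tau$, and \[\chi(\beta)=\frac{\rho\tau^2\beta^2\lambda_{\max}(1-\lambda_{\max}/n)^{-2\tau}}{n}.\] Then for every integer $r\ge1$ and every $m\ge rT$, \[E_m\le\Big(1-\frac{\nu_\tau(\beta)}{2\kappa}\Big)\Big(1-\frac{\nu_\tau(\beta)(1-\lambda_{\max}/n)^{\tau}}{2\kappa}+\chi(\beta)\Big)^{r-1}E_0.\]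
   Context: Let $n\ge2$ and let $A\in\mathbb{R}^{n\times n}$ be symmetric positive definite with all diagonal entries equal to $1$; let $b\in\mathbb{R}^n$ and $x^\star=A^{-1}b$. Let $\lambda_{\min},\lambda_{\max}$ be the smallest and largest eigenvalues of $A$ and $\kappa=\lambda_{\max}/\lambda_{\min}$. Write $(x,y)_A=y^TAx$ and $\|x\|_A=\sqrt{(x,x)_A}$; $e^{(1)},\dots,e^{(n)}$ are the standard basis vectors. Consistent-read iteration: let $d_0,d_1,\dots$ be i.i.d. random vectors, each uniformly distributed on $\{e^{(1)},\dots,e^{(n)}\}$; let $\tau\ge0$ be an integer and $k(0),k(1),\dots$ deterministic integers (not depending on the $d_j$) with $j-\tau\le k(j)\le j$; given $x_0\in\mathbb{R}^n$ and a step size $\beta$, define for $j\ge0$ \[\gamma_j=(x^\star-x_{k(j)},d_j)_A,\qquad x_{j+1}=x_j+\beta\gamma_jd_j.\] Define $E_m=\mathbb{E}[\|x_m-x^\star\|_A^2]$. *)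

theory Defs
  imports "HOL-Analysis.Analysis" "HOL-Probability.Probability"
begin

definition eigenvalues :: "real^'n^'n \<Rightarrow> real set" where
  "eigenvalues A = {l. \<exists>v. v \<noteq> 0 \<and> A *v v = l *\<^sub>R v}"

definition lambda_max :: "real^'n^'n \<Rightarrow> real" where
  "lambda_max A = Max (eigenvalues A)"

definition lambda_min :: "real^'n^'n \<Rightarrow> real" where
  "lambda_min A = Min (eigenvalues A)"

definition sym_pos_def :: "real^'n^'n \<Rightarrow> bool" where
  "sym_pos_def A \<longleftrightarrow> transpose A = A \<and> (\<forall>x. x \<noteq> 0 \<longrightarrow> x \<bullet> (A *v x) > 0)"

definition A_inner :: "real^'n^'n \<Rightarrow> real^'n \<Rightarrow> real^'n \<Rightarrow> real" where
  "A_inner A x y = y \<bullet> (A *v x)"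

definition A_norm2 :: "real^'n^'n \<Rightarrow> real^'n \<Rightarrow> real" where
  "A_norm2 A x = A_inner A x x"

definition basis_vec :: "'n::finite \<Rightarrow> real^'n" where
  "basis_vec i = axis i 1"

text \<open>Expectation over i.i.d. uniform directions d_0,...,d_{m-1} (each uniform on the
  standard basis, encoded by its index).  X d m is the m-th iterate for direction sequence d.\<close>
definition exp_err :: "real^'n^'n \<Rightarrow> real^'n \<Rightarrow> ((nat \<Rightarrow> 'n::finite) \<Rightarrow> nat \<Rightarrow> real^'n) \<Rightarrow> nat \<Rightarrow> real" where
  "exp_err A xs X m =
     measure_pmf.expectation (Pi_pmf {..<m} undefined (\<lambda>_. pmf_of_set (UNIV :: 'n set)))
       (\<lambda>d. A_norm2 A (X d m - xs))"

end

theory Submission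
  imports Defs
begin

text \<open>Let \<open>E\<^sub>j\<close> be the expected squared \<open>A\<close>-norm of the error \<open>e\<^sub>j = x\<^sub>j - x\<^sup>\<star>\<close> and \<open>G\<^sub>j\<close> the
  expected value of \<open>\<gamma>\<^sub>j\<^sup>2\<close>. Since \<open>d\<^sub>j\<close> is independent of the iterate read at \<open>k(j)\<close>,
  \<open>G\<^sub>j\<close> is the expected value of \<open>|A e\<^sub>k\<^sub>(\<^sub>j\<^sub>)|\<^sup>2 / n\<close>, which lies between \<open>\<lambda>\<^sub>m\<^sub>i\<^sub>n E\<^sub>k\<^sub>(\<^sub>j\<^sub>) / n\<close>
  and \<open>\<lambda>\<^sub>m\<^sub>a\<^sub>x E\<^sub>k\<^sub>(\<^sub>j\<^sub>) / n\<close>; similarly one coordinate step shrinks \<open>E\<close> by at most the factor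
  \<open>q = 1 - \<lambda>\<^sub>m\<^sub>a\<^sub>x / n\<close>. In the expansion of the new error the stale updates \<open>t \<in> [k(j), j)\<close>
  only enter through cross terms \<open>\<gamma>\<^sub>j \<gamma>\<^sub>t A(d\<^sub>j, d\<^sub>t)\<close>, and averaging over the direction that
  the other factor does not depend on bounds \<open>|A(d\<^sub>j, d\<^sub>t)|\<close> by \<open>\<rho>\<close>. Hence
  \<open>E\<^sub>j\<^sub>+\<^sub>1 \<le> E\<^sub>j - (2\<beta> - \<beta>\<^sup>2) G\<^sub>j + \<beta>\<^sup>2 \<rho> \<Sum>\<^sub>t (G\<^sub>j + G\<^sub>t)\<close>, and summing over a window
  starting at \<open>s\<close> leaves \<open>E\<^sub>s - \<nu> \<Sum>\<^sub>j G\<^sub>j\<close> plus the reads reaching back before \<open>s\<close>, which cost at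
  most \<open>\<chi> E\<^sub>s\<close>. As \<open>q ^ T\<^sub>0 \<le> 1/2\<close>, a window of length \<open>T\<^sub>0 + \<tau>\<close> has
  \<open>\<Sum>\<^sub>j G\<^sub>j \<ge> q ^ \<tau> E\<^sub>s / (2\<kappa>)\<close>. This proves (a) for the first window, which has neither
  earlier reads nor the loss \<open>q ^ \<tau>\<close>, and a contraction by \<open>1 - \<nu> q ^ \<tau> / (2\<kappa>) + \<chi>\<close> for
  every further window.\<close>

section \<open>Spectral bounds for symmetric matrices\<close>

lemma quadratic_nonneg_imp_discriminant:
  fixes a p c :: real
  assumes c: "0 \<le> c" and nonneg: "\<And>t. 0 \<le> a - 2 * t * p + t\<^sup>2 * c"
  shows "p\<^sup>2 \<le> a * c"
proof (cases "c = 0")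
  case True
  have "p = 0"
  proof (rule ccontr)
    assume "p \<noteq> 0"
    then show False using nonneg[of "(a + 1) / (2 * p)"] True by simp
  qed
  then show ?thesis using True by simp
next
  case False
  with c have "0 < c" by simp
  have "0 \<le> a - 2 * (p / c) * p + (p / c)\<^sup>2 * c" by (rule nonneg)
  also have "\<dots> = a - p\<^sup>2 / c" using \<open>0 < c\<close> by (simp add: power2_eq_square field_simps)
  finally show ?thesis using \<open>0 < c\<close> by (simp add: field_simps)
qed

lemma psd_form_cauchy_schwarz:
  fixes B :: "real^'n^'n"
  assumes sym: "\<And>x y. x \<bullet> (B *v y) = y \<bullet> (B *v x)" and psd: "\<And>x. 0 \<le> x \<bullet> (B *v x)"
  shows "(y \<bullet> (B *v x))\<^sup>2 \<le> (y \<bullet> (B *v y)) * (x \<bullet> (B *v x))"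
proof (rule quadratic_nonneg_imp_discriminant[OF psd])
  fix t
  have "0 \<le> (y - t *\<^sub>R x) \<bullet> (B *v (y - t *\<^sub>R x))" by (rule psd)
  also have "\<dots> = y \<bullet> (B *v y) - 2 * t * (y \<bullet> (B *v x)) + t\<^sup>2 * (x \<bullet> (B *v x))"
    using sym[of x y]
    by (simp add: matrix_vector_mult_diff_distrib matrix_vector_mult_scaleR inner_diff_left
        inner_diff_right power2_eq_square algebra_simps)
  finally show "0 \<le> y \<bullet> (B *v y) - 2 * t * (y \<bullet> (B *v x)) + t\<^sup>2 * (x \<bullet> (B *v x))" .
qed

lemma psd_form_zero_imp_zero:
  fixes B :: "real^'n^'n"
  assumes sym: "\<And>x y. x \<bullet> (B *v y) = y \<bullet> (B *v x)" and psd: "\<And>x. 0 \<le> x \<bullet> (B *v x)"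
    and "v \<bullet> (B *v v) = 0"
  shows "B *v v = 0"
proof -
  have "((B *v v) \<bullet> (B *v v))\<^sup>2 \<le> 0"
    using psd_form_cauchy_schwarz[OF sym psd, of "B *v v" v] assms(3) by simp
  then show ?thesis by simp
qed

lemma symmetric_inner_matrix_vector:
  fixes A :: "real^'n^'n"
  assumes "transpose A = A"
  shows "x \<bullet> (A *v y) = y \<bullet> (A *v x)"
  by (metis assms dot_lmul_matrix inner_commute transpose_matrix_vector)

lemma symmetric_matrix_entry:
  fixes A :: "real^'n^'n"
  assumes "transpose A = A"
  shows "A $ i $ j = A $ j $ i"
  using arg_cong[OF assms, of "\<lambda>B. B $ i $ j"] by (simp add: transpose_def)

lemma matrix_vector_mult_axis_component: "(A *v axis j 1) $ i = (A::real^'n^'n) $ i $ j"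
  by (simp add: matrix_vector_mult_basis column_def)

lemma inner_matrix_vector_axis:
  fixes A :: "real^'n^'n"
  assumes "transpose A = A"
  shows "u \<bullet> (A *v axis i 1) = (A *v u) $ i"
  using symmetric_inner_matrix_vector[OF assms, of u "axis i 1"] by (simp add: inner_axis')

lemma quadratic_form_scaleR:
  fixes A :: "real^'n^'n"
  shows "(c *\<^sub>R x) \<bullet> (A *v (c *\<^sub>R x)) = c\<^sup>2 * (x \<bullet> (A *v x))"
  by (simp add: matrix_vector_mult_scaleR power2_eq_square)

lemma symmetric_rayleigh_min_eigenvalue:
  fixes A :: "real^'n::finite^'n"
  assumes sym: "transpose A = A"
  shows "\<exists>m\<in>eigenvalues A. \<forall>x. m * (x \<bullet> x) \<le> x \<bullet> (A *v x)"
proof -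
  obtain i :: 'n where True by simp
  then have "axis i 1 \<in> sphere (0::real^'n) 1" by simp
  then have "sphere (0::real^'n) 1 \<noteq> {}" by blast
  moreover have "continuous_on (sphere 0 1) (\<lambda>x. x \<bullet> (A *v x))"
    by (intro continuous_intros matrix_vector_mult_linear_continuous_on continuous_on_id)
  ultimately obtain v where v: "v \<in> sphere 0 1"
    and v_min: "\<And>y. y \<in> sphere 0 1 \<Longrightarrow> v \<bullet> (A *v v) \<le> y \<bullet> (A *v y)"
    using continuous_attains_inf[OF compact_sphere] by blast
  define m where "m = v \<bullet> (A *v v)"
  have bound: "m * (x \<bullet> x) \<le> x \<bullet> (A *v x)" for x
  proof (cases "x = 0")
    case False
    have "m \<le> ((1 / norm x) *\<^sub>R x) \<bullet> (A *v ((1 / norm x) *\<^sub>R x))"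
      unfolding m_def using False by (intro v_min) simp
    also have "\<dots> = (x \<bullet> (A *v x)) / (norm x)\<^sup>2"
      unfolding quadratic_form_scaleR by (simp add: power_divide)
    finally show ?thesis using False by (simp add: field_simps dot_square_norm)
  qed simp
  define B where "B = A - m *\<^sub>R mat 1"
  have B_mult: "B *v x = A *v x - m *\<^sub>R x" for x
    by (simp add: B_def matrix_vector_mult_diff_rdistrib scaleR_matrix_vector_assoc[symmetric])
  have "B *v v = 0"
  proof (rule psd_form_zero_imp_zero)
    show "x \<bullet> (B *v y) = y \<bullet> (B *v x)" for x y
      using symmetric_inner_matrix_vector[OF sym, of x y] by (simp add: B_mult inner_diff_right inner_commute)
    show "0 \<le> x \<bullet> (B *v x)" for x using bound[of x] by (simp add: B_mult inner_diff_right)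
    show "v \<bullet> (B *v v) = 0" using v by (simp add: B_mult inner_diff_right m_def dot_square_norm)
  qed
  moreover have "v \<noteq> 0" using v by auto
  ultimately have "m \<in> eigenvalues A" unfolding eigenvalues_def B_mult by auto
  with bound show ?thesis by blast
qed

lemma symmetric_rayleigh_max_eigenvalue:
  fixes A :: "real^'n::finite^'n"
  assumes sym: "transpose A = A"
  shows "\<exists>m\<in>eigenvalues A. \<forall>x. x \<bullet> (A *v x) \<le> m * (x \<bullet> x)"
proof -
  have neg_mult: "(- A) *v x = - (A *v x)" for x
    using matrix_vector_mult_diff_rdistrib[of 0 A x] by simp
  have "transpose (- A) = - A" using sym by (simp add: transpose_def vec_eq_iff)
  then obtain m where m: "m \<in> eigenvalues (- A)" and bound: "\<And>x. m * (x \<bullet> x) \<le> x \<bullet> ((- A) *v x)"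
    using symmetric_rayleigh_min_eigenvalue by blast
  from m obtain v where "v \<noteq> 0" "(- A) *v v = m *\<^sub>R v" unfolding eigenvalues_def by auto
  then have "- m \<in> eigenvalues A" unfolding eigenvalues_def neg_mult
    by (auto intro!: exI[of _ v] simp: minus_equation_iff[of "A *v v"])
  moreover have "x \<bullet> (A *v x) \<le> (- m) * (x \<bullet> x)" for x using bound[of x] by (simp add: neg_mult)
  ultimately show ?thesis by blast
qed

lemma symmetric_eigenvalues_finite:
  fixes A :: "real^'n::finite^'n"
  assumes sym: "transpose A = A"
  shows "finite (eigenvalues A)"
proof -
  define ev where "ev l = (SOME v. v \<noteq> 0 \<and> A *v v = l *\<^sub>R v)" for l
  have ev: "ev l \<noteq> 0 \<and> A *v ev l = l *\<^sub>R ev l" if "l \<in> eigenvalues A" for l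
    using that unfolding eigenvalues_def ev_def by (rule CollectE) (rule someI_ex)
  have inj: "inj_on ev (eigenvalues A)"
  proof (rule inj_onI)
    fix l1 l2 assume l: "l1 \<in> eigenvalues A" "l2 \<in> eigenvalues A" "ev l1 = ev l2"
    then have "l1 *\<^sub>R ev l1 = l2 *\<^sub>R ev l1" using ev[of l1] ev[of l2] by metis
    then show "l1 = l2" using ev[OF l(1)] by simp
  qed
  have "pairwise orthogonal (ev ` eigenvalues A)"
  proof (rule pairwiseI)
    fix u w assume "u \<in> ev ` eigenvalues A" "w \<in> ev ` eigenvalues A" "u \<noteq> w"
    then obtain l1 l2 where l: "l1 \<in> eigenvalues A" "l2 \<in> eigenvalues A"
      "u = ev l1" "w = ev l2" "l1 \<noteq> l2"
      by auto
    have "l1 * (w \<bullet> u) = w \<bullet> (A *v u)" using ev[OF l(1)] l by simp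
    also have "\<dots> = u \<bullet> (A *v w)" by (rule symmetric_inner_matrix_vector[OF sym])
    also have "\<dots> = l2 * (w \<bullet> u)" using ev[OF l(2)] l by (simp add: inner_commute)
    finally have "(l1 - l2) * (w \<bullet> u) = 0" by (simp add: algebra_simps)
    then show "orthogonal u w" using l(5) by (simp add: orthogonal_def inner_commute)
  qed
  then have "finite (ev ` eigenvalues A)" by (rule pairwise_orthogonal_imp_finite)
  then show ?thesis using inj finite_imageD by blast
qed

lemma lambda_min_in_eigenvalues:
  fixes A :: "real^'n::finite^'n"
  assumes "transpose A = A"
  shows "lambda_min A \<in> eigenvalues A"
  unfolding lambda_min_def
  using symmetric_eigenvalues_finite[OF assms] symmetric_rayleigh_min_eigenvalue[OF assms]
  by (intro Min_in) auto

lemma lambda_max_in_eigenvalues: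
  fixes A :: "real^'n::finite^'n"
  assumes "transpose A = A"
  shows "lambda_max A \<in> eigenvalues A"
  unfolding lambda_max_def
  using symmetric_eigenvalues_finite[OF assms] symmetric_rayleigh_min_eigenvalue[OF assms]
  by (intro Max_in) auto

lemma lambda_min_le_lambda_max:
  fixes A :: "real^'n::finite^'n"
  assumes "transpose A = A"
  shows "lambda_min A \<le> lambda_max A"
  unfolding lambda_max_def
  using symmetric_eigenvalues_finite[OF assms] lambda_min_in_eigenvalues[OF assms] by (rule Max_ge)

lemma lambda_min_le_rayleigh:
  fixes A :: "real^'n::finite^'n"
  assumes "transpose A = A"
  shows "lambda_min A * (x \<bullet> x) \<le> x \<bullet> (A *v x)"
proof -
  obtain m where m: "m \<in> eigenvalues A" and bound: "m * (x \<bullet> x) \<le> x \<bullet> (A *v x)"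
    using symmetric_rayleigh_min_eigenvalue[OF assms] by blast
  have "lambda_min A \<le> m"
    unfolding lambda_min_def using symmetric_eigenvalues_finite[OF assms] m by (rule Min_le)
  then show ?thesis using bound by (meson inner_ge_zero mult_right_mono order_trans)
qed

lemma rayleigh_le_lambda_max:
  fixes A :: "real^'n::finite^'n"
  assumes "transpose A = A"
  shows "x \<bullet> (A *v x) \<le> lambda_max A * (x \<bullet> x)"
proof -
  obtain m where m: "m \<in> eigenvalues A" and bound: "x \<bullet> (A *v x) \<le> m * (x \<bullet> x)"
    using symmetric_rayleigh_max_eigenvalue[OF assms] by blast
  have "m \<le> lambda_max A"
    unfolding lambda_max_def using symmetric_eigenvalues_finite[OF assms] m by (rule Max_ge)
  then show ?thesis using bound by (meson inner_ge_zero mult_right_mono order_trans)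
qed

lemma sym_pos_def_nonneg: "sym_pos_def A \<Longrightarrow> 0 \<le> x \<bullet> (A *v x)"
  unfolding sym_pos_def_def by (cases "x = 0") (auto intro: less_imp_le)

lemma sym_pos_def_eigenvalue_pos:
  assumes "sym_pos_def A" "l \<in> eigenvalues A"
  shows "0 < l"
proof -
  obtain v where v: "v \<noteq> 0" "A *v v = l *\<^sub>R v" using assms(2) unfolding eigenvalues_def by auto
  have "0 < v \<bullet> (A *v v)" using assms(1) v(1) unfolding sym_pos_def_def by blast
  also have "\<dots> = l * (v \<bullet> v)" using v(2) by simp
  finally show ?thesis using inner_ge_zero[of v] by (auto simp: zero_less_mult_iff)
qed

lemma lambda_min_pos:
  fixes A :: "real^'n::finite^'n"
  shows "sym_pos_def A \<Longrightarrow> 0 < lambda_min A"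
  by (meson lambda_min_in_eigenvalues sym_pos_def_def sym_pos_def_eigenvalue_pos)

lemma lambda_max_pos:
  fixes A :: "real^'n::finite^'n"
  shows "sym_pos_def A \<Longrightarrow> 0 < lambda_max A"
  by (meson lambda_max_in_eigenvalues sym_pos_def_def sym_pos_def_eigenvalue_pos)

lemma inner_matrix_vector_le_lambda_max:
  fixes A :: "real^'n::finite^'n"
  assumes spd: "sym_pos_def A"
  shows "(A *v x) \<bullet> (A *v x) \<le> lambda_max A * (x \<bullet> (A *v x))"
proof -
  have sym: "transpose A = A" using spd by (simp add: sym_pos_def_def)
  define p where "p = (A *v x) \<bullet> (A *v x)"
  have "p\<^sup>2 \<le> ((A *v x) \<bullet> (A *v (A *v x))) * (x \<bullet> (A *v x))"
    unfolding p_def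
    by (rule psd_form_cauchy_schwarz[OF symmetric_inner_matrix_vector[OF sym] sym_pos_def_nonneg[OF spd]])
  also have "\<dots> \<le> (lambda_max A * p) * (x \<bullet> (A *v x))"
    unfolding p_def by (intro mult_right_mono rayleigh_le_lambda_max sym sym_pos_def_nonneg spd)
  finally have "p * p \<le> p * (lambda_max A * (x \<bullet> (A *v x)))" by (simp add: power2_eq_square mult_ac)
  moreover have "0 \<le> lambda_max A * (x \<bullet> (A *v x))"
    using lambda_max_pos[OF spd] sym_pos_def_nonneg[OF spd] by simp
  ultimately show ?thesis unfolding p_def
    by (metis inner_ge_zero mult_le_cancel_left_pos order_le_less)
qed

lemma lambda_min_le_inner_matrix_vector:
  fixes A :: "real^'n::finite^'n"
  assumes spd: "sym_pos_def A"
  shows "lambda_min A * (x \<bullet> (A *v x)) \<le> (A *v x) \<bullet> (A *v x)"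
proof -
  have sym: "transpose A = A" using spd by (simp add: sym_pos_def_def)
  define N where "N = x \<bullet> (A *v x)"
  have pos: "0 < lambda_min A" by (rule lambda_min_pos[OF spd])
  have "lambda_min A * N\<^sup>2 \<le> lambda_min A * ((x \<bullet> x) * ((A *v x) \<bullet> (A *v x)))"
    unfolding N_def using pos by (intro mult_left_mono Cauchy_Schwarz_ineq) simp
  also have "\<dots> \<le> N * ((A *v x) \<bullet> (A *v x))"
    unfolding N_def using lambda_min_le_rayleigh[OF sym, of x] by (simp add: mult_right_mono flip: mult.assoc)
  finally have "lambda_min A * N * N \<le> N * ((A *v x) \<bullet> (A *v x))" by (simp add: power2_eq_square mult_ac)
  moreover have "0 \<le> N" unfolding N_def by (rule sym_pos_def_nonneg[OF spd])
  ultimately show ?thesis unfolding N_def[symmetric]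
    by (cases "N = 0") (simp_all add: mult.commute mult_le_cancel_left_pos)
qed

text \<open>For a unit eigenvector \<open>u\<close> of \<open>\<lambda>\<^sub>m\<^sub>a\<^sub>x\<close>, the vectors \<open>e\<^sub>i - u\<^sub>i u\<close> have
  \<open>A\<close>-norm \<open>1 - \<lambda>\<^sub>m\<^sub>a\<^sub>x u\<^sub>i\<^sup>2\<close>; these add up to \<open>n - \<lambda>\<^sub>m\<^sub>a\<^sub>x\<close>, and not all of them vanish when \<open>n \<ge> 2\<close>.\<close>
lemma lambda_max_less_card:
  fixes A :: "real^'n::finite^'n"
  assumes spd: "sym_pos_def A" and diag: "\<And>i. A $ i $ i = 1" and n2: "2 \<le> CARD('n)"
  shows "lambda_max A < real CARD('n)"
proof -
  have sym: "transpose A = A" using spd by (simp add: sym_pos_def_def)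
  define l where "l = lambda_max A"
  obtain v where v: "v \<noteq> 0" "A *v v = l *\<^sub>R v"
    using lambda_max_in_eigenvalues[OF sym] unfolding eigenvalues_def l_def by auto
  define u where "u = (1 / norm v) *\<^sub>R v"
  have Au: "A *v u = l *\<^sub>R u" using v by (simp add: u_def matrix_vector_mult_scaleR)
  have uu: "u \<bullet> u = 1" using v by (simp add: u_def dot_square_norm)
  define y where "y i = axis i 1 - (u $ i) *\<^sub>R u" for i
  have norm_y: "y i \<bullet> (A *v y i) = 1 - l * (u $ i)\<^sup>2" for i
    using inner_matrix_vector_axis[OF sym, of u i] Au uu diag[of i]
    by (simp add: y_def matrix_vector_mult_diff_distrib matrix_vector_mult_scaleR inner_diff_left
        inner_diff_right inner_axis' matrix_vector_mult_axis_component power2_eq_square algebra_simps)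
  obtain i :: 'n where True by simp
  have "UNIV \<noteq> {i}"
  proof
    assume "UNIV = {i}"
    then have "CARD('n) = card {i}" by (rule arg_cong)
    with n2 show False by simp
  qed
  then obtain j where ij: "i \<noteq> j" by (metis UNIV_eq_I singleton_iff)
  obtain a where "y a \<noteq> 0"
  proof (rule ccontr)
    assume "\<not> thesis"
    with that have yi: "axis i 1 = (u $ i) *\<^sub>R u" and yj: "axis j 1 = (u $ j) *\<^sub>R u"
      by (auto simp: y_def)
    have "u $ i * u $ i = 1" using arg_cong[OF yi, of "\<lambda>z. z $ i"] by (simp add: axis_def)
    moreover have "u $ j * u $ j = 1" using arg_cong[OF yj, of "\<lambda>z. z $ j"] by (simp add: axis_def)
    moreover have "u $ j * u $ i = 0" using arg_cong[OF yj, of "\<lambda>z. z $ i"] ij by (simp add: axis_def)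
    ultimately show False by (metis mult_eq_0_iff zero_neq_one)
  qed
  have "0 < (\<Sum>i\<in>UNIV. 1 - l * (u $ i)\<^sup>2)"
  proof (rule sum_pos2[of UNIV a])
    show "0 < 1 - l * (u $ a)\<^sup>2"
      using spd \<open>y a \<noteq> 0\<close> unfolding sym_pos_def_def norm_y[symmetric] by blast
    show "0 \<le> 1 - l * (u $ i)\<^sup>2" for i using norm_y[of i] sym_pos_def_nonneg[OF spd, of "y i"] by simp
  qed simp_all
  also have "\<dots> = real CARD('n) - l * (u \<bullet> u)"
    by (simp add: sum_subtractf sum_distrib_left inner_vec_def power2_eq_square)
  finally show ?thesis using uu by (simp add: l_def)
qed

lemma sum_component_power2: "(\<Sum>y\<in>UNIV. (v $ y)\<^sup>2) = v \<bullet> (v :: real^'n)"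
  by (simp add: inner_vec_def power2_eq_square)

lemma A_norm2_add_axis:
  fixes A :: "real^'n^'n"
  assumes "transpose A = A" "A $ i $ i = 1"
  shows "A_norm2 A (u + c *\<^sub>R axis i 1) = A_norm2 A u + 2 * c * (A *v u) $ i + c\<^sup>2"
  using inner_matrix_vector_axis[OF assms(1), of u i] assms(2)
  by (simp add: A_norm2_def A_inner_def matrix_vector_right_distrib matrix_vector_mult_scaleR
      inner_add_left inner_add_right inner_axis' matrix_vector_mult_axis_component
      power2_eq_square algebra_simps)

lemma A_norm2_add_axis_ge:
  fixes A :: "real^'n^'n"
  assumes "transpose A = A" "A $ i $ i = 1"
  shows "A_norm2 A u - ((A *v u) $ i)\<^sup>2 \<le> A_norm2 A (u + c *\<^sub>R axis i 1)"
  unfolding A_norm2_add_axis[OF assms]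
  using zero_le_power2[of "c + (A *v u) $ i"] by (simp add: power2_eq_square algebra_simps)

section \<open>Averages over direction sequences\<close>

definition dir_seqs :: "nat \<Rightarrow> (nat \<Rightarrow> 'n::finite) set" where
  "dir_seqs M = PiE_dflt {..<M} undefined (\<lambda>_. UNIV)"

definition avg :: "nat \<Rightarrow> ((nat \<Rightarrow> 'n::finite) \<Rightarrow> real) \<Rightarrow> real" where
  "avg M f = (\<Sum>d\<in>dir_seqs M. f d) / real (card (dir_seqs M :: (nat \<Rightarrow> 'n) set))"

lemma finite_dir_seqs: "finite (dir_seqs M)"
  unfolding dir_seqs_def by (rule finite_PiE_dflt) auto

lemma card_dir_seqs_pos: "0 < real (card (dir_seqs M :: (nat \<Rightarrow> 'n::finite) set))"
  unfolding dir_seqs_def by (subst card_PiE_dflt) auto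

lemma fun_upd_in_dir_seqs: "d \<in> dir_seqs M \<Longrightarrow> i < M \<Longrightarrow> d(i := y) \<in> dir_seqs M"
  unfolding dir_seqs_def PiE_dflt_def by auto

lemma avg_add: "avg M (\<lambda>d. f d + g d) = avg M f + avg M g"
  unfolding avg_def by (simp add: sum.distrib add_divide_distrib)

lemma avg_diff: "avg M (\<lambda>d. f d - g d) = avg M f - avg M g"
  unfolding avg_def by (simp add: sum_subtractf diff_divide_distrib)

lemma avg_cmult: "avg M (\<lambda>d. c * f d) = c * avg M f"
  unfolding avg_def by (simp add: sum_distrib_left[symmetric])

lemma avg_sum: "avg M (\<lambda>d. \<Sum>t\<in>T. f t d) = (\<Sum>t\<in>T. avg M (f t))"
  unfolding avg_def by (cases "finite T") (simp_all add: sum.swap[of _ T] sum_divide_distrib)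

lemma avg_mono:
  fixes f g :: "(nat \<Rightarrow> 'n::finite) \<Rightarrow> real"
  shows "(\<And>d. f d \<le> g d) \<Longrightarrow> avg M f \<le> avg M g"
  unfolding avg_def using card_dir_seqs_pos[of M] by (intro divide_right_mono sum_mono) auto

lemma avg_nonneg:
  fixes f :: "(nat \<Rightarrow> 'n::finite) \<Rightarrow> real"
  shows "(\<And>d. 0 \<le> f d) \<Longrightarrow> 0 \<le> avg M f"
  unfolding avg_def by (simp add: sum_nonneg)

lemma sum_fun_upd_swap:
  fixes f :: "(nat \<Rightarrow> 'n) \<Rightarrow> 'a::comm_monoid_add" and S :: "(nat \<Rightarrow> 'n) set"
  assumes upd: "\<And>d y. d \<in> S \<Longrightarrow> d(i := y) \<in> S"
  shows "(\<Sum>(d, y)\<in>S \<times> UNIV. f (d(i := y))) = (\<Sum>(d, y)\<in>S \<times> (UNIV :: 'n set). f d)"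
proof -
  define \<phi> :: "(nat \<Rightarrow> 'n) \<times> 'n \<Rightarrow> (nat \<Rightarrow> 'n) \<times> 'n" where "\<phi> = (\<lambda>(d, y). (d(i := y), d i))"
  have "bij_betw \<phi> (S \<times> UNIV) (S \<times> UNIV)"
    by (rule bij_betw_byWitness[where f' = \<phi>]) (auto simp: \<phi>_def upd)
  from sum.reindex_bij_betw[OF this, of "\<lambda>(d, y). f d"] show ?thesis
    by (simp add: \<phi>_def case_prod_beta)
qed

lemma avg_resample:
  fixes f :: "(nat \<Rightarrow> 'n::finite) \<Rightarrow> real"
  assumes "i < M"
  shows "avg M f = avg M (\<lambda>d. (\<Sum>y\<in>UNIV. f (d(i := y))) / real CARD('n))"
proof -
  have "(\<Sum>d\<in>dir_seqs M. \<Sum>y\<in>UNIV. f (d(i := y))) = (\<Sum>(d, y)\<in>dir_seqs M \<times> UNIV. f (d(i := y)))"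
    by (simp add: sum.cartesian_product)
  also have "\<dots> = (\<Sum>(d, y)\<in>dir_seqs M \<times> (UNIV :: 'n set). f d)"
    by (rule sum_fun_upd_swap) (use fun_upd_in_dir_seqs assms in auto)
  also have "\<dots> = real CARD('n) * (\<Sum>d\<in>dir_seqs M. f d)"
    by (simp add: sum.cartesian_product[symmetric] sum_distrib_left)
  finally show ?thesis unfolding avg_def by (simp add: sum_divide_distrib[symmetric])
qed

lemma expectation_Pi_pmf_eq_avg:
  fixes F :: "(nat \<Rightarrow> 'n::finite) \<Rightarrow> real"
  assumes "m \<le> M" and prefix: "\<And>d d'. (\<And>l. l < m \<Longrightarrow> d l = d' l) \<Longrightarrow> F d = F d'"
  shows "measure_pmf.expectation (Pi_pmf {..<m} undefined (\<lambda>_. pmf_of_set UNIV)) F = avg M F"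
proof -
  have "Pi_pmf {..<m} undefined (\<lambda>_. pmf_of_set (UNIV :: 'n set)) =
      map_pmf (\<lambda>f x. if x \<in> {..<m} then f x else undefined) (Pi_pmf {..<M} undefined (\<lambda>_. pmf_of_set UNIV))"
    by (rule Pi_pmf_subset) (use assms in auto)
  then have "measure_pmf.expectation (Pi_pmf {..<m} undefined (\<lambda>_. pmf_of_set UNIV)) F =
      measure_pmf.expectation (Pi_pmf {..<M} undefined (\<lambda>_. pmf_of_set (UNIV :: 'n set)))
        (\<lambda>f. F (\<lambda>x. if x \<in> {..<m} then f x else undefined))"
    by (simp add: integral_map_pmf)
  also have "\<dots> = measure_pmf.expectation (Pi_pmf {..<M} undefined (\<lambda>_. pmf_of_set UNIV)) F"
    by (intro arg_cong[where f = "measure_pmf.expectation _"] ext prefix[symmetric]) auto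
  also have "Pi_pmf {..<M} undefined (\<lambda>_. pmf_of_set (UNIV :: 'n set)) = pmf_of_set (dir_seqs M)"
    unfolding dir_seqs_def by (rule Pi_pmf_of_set) auto
  also have "measure_pmf.expectation (pmf_of_set (dir_seqs M)) F = avg M F"
    unfolding avg_def by (rule integral_pmf_of_set) (auto simp: finite_dir_seqs dir_seqs_def)
  finally show ?thesis .
qed

definition max_mean_abs_row :: "real^'n::finite^'n \<Rightarrow> real" where
  "max_mean_abs_row A = Max (range (\<lambda>l. (\<Sum>r\<in>UNIV. \<bar>A $ l $ r\<bar>) / real CARD('n)))"

lemma mean_abs_row_le:
  fixes A :: "real^'n::finite^'n"
  shows "(\<Sum>r\<in>UNIV. \<bar>A $ l $ r\<bar>) / real CARD('n) \<le> max_mean_abs_row A"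
  unfolding max_mean_abs_row_def by (rule Max_ge) auto

lemma max_mean_abs_row_nonneg:
  fixes A :: "real^'n::finite^'n"
  shows "0 \<le> max_mean_abs_row A"
proof -
  have "0 \<le> (\<Sum>r\<in>UNIV. \<bar>A $ undefined $ r\<bar>) / real CARD('n)" by (simp add: sum_nonneg)
  then show ?thesis using mean_abs_row_le order_trans by blast
qed

lemma avg_abs_entry_le:
  fixes A :: "real^'n::finite^'n"
  assumes "i < M" and F_indep: "\<And>d y. F (d(i := y)) = F d" and F_nonneg: "\<And>d. 0 \<le> F d"
    and r_indep: "\<And>d y. r (d(i := y)) = r d"
  shows "avg M (\<lambda>d. \<bar>A $ r d $ d i\<bar> * F d) \<le> max_mean_abs_row A * avg M F"
proof -
  have "avg M (\<lambda>d. \<bar>A $ r d $ d i\<bar> * F d)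
      = avg M (\<lambda>d. (\<Sum>y\<in>UNIV. \<bar>A $ r d $ y\<bar> * F d) / real CARD('n))"
    by (subst avg_resample[OF \<open>i < M\<close>]) (simp add: F_indep r_indep)
  also have "\<dots> \<le> avg M (\<lambda>d. max_mean_abs_row A * F d)"
  proof (rule avg_mono)
    fix d
    have "(\<Sum>y\<in>UNIV. \<bar>A $ r d $ y\<bar> * F d) / real CARD('n)
        = (\<Sum>y\<in>UNIV. \<bar>A $ r d $ y\<bar>) / real CARD('n) * F d"
      by (simp add: sum_distrib_right[symmetric])
    also have "\<dots> \<le> max_mean_abs_row A * F d" by (rule mult_right_mono[OF mean_abs_row_le F_nonneg])
    finally show "(\<Sum>y\<in>UNIV. \<bar>A $ r d $ y\<bar> * F d) / real CARD('n) \<le> max_mean_abs_row A * F d" .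
  qed
  finally show ?thesis by (simp add: avg_cmult)
qed

lemma power_le_half_of_ln:
  fixes q :: real
  assumes "0 < q" "q < 1" "ln (1/2) / ln q \<le> real m"
  shows "q ^ m \<le> 1/2"
proof -
  have "ln q < 0" using assms by simp
  then have "real m * ln q \<le> ln (1/2)" using assms(3) by (simp add: divide_le_eq mult.commute)
  then have "ln (q ^ m) \<le> ln (1/2)" using assms by (simp add: ln_realpow)
  then show ?thesis using assms by simp
qed

lemma geometric_sum_ge:
  fixes q :: real
  assumes "q < 1" "q ^ L \<le> 1/2"
  shows "1 / (2 * (1 - q)) \<le> (\<Sum>i<L. q ^ i)"
proof -
  have "1 / (2 * (1 - q)) = (1/2) / (1 - q)" by simp
  also have "\<dots> \<le> (1 - q ^ L) / (1 - q)" using assms by (intro divide_right_mono) auto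
  also have "\<dots> = (\<Sum>i<L. q ^ i)" using assms by (simp add: sum_gp_strict)
  finally show ?thesis .
qed

lemma power_growth_lower_bound:
  fixes a :: "nat \<Rightarrow> real"
  assumes "0 \<le> q" and step: "\<And>j. h \<le> j \<Longrightarrow> j < i \<Longrightarrow> q * a j \<le> a (Suc j)" and "h \<le> i"
  shows "q ^ (i - h) * a h \<le> a i"
  using step \<open>h \<le> i\<close>
proof (induction i)
  case (Suc i)
  show ?case
  proof (cases "h \<le> i")
    case True
    have "q ^ (Suc i - h) * a h = q * (q ^ (i - h) * a h)" using True by (simp add: Suc_diff_le)
    also have "\<dots> \<le> q * a i" using Suc True \<open>0 \<le> q\<close> by (intro mult_left_mono) auto
    also have "\<dots> \<le> a (Suc i)" using Suc.prems True by simp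
    finally show ?thesis .
  next
    case False
    with Suc.prems have "h = Suc i" by simp
    then show ?thesis by simp
  qed
qed simp

lemma telescope_le:
  fixes a c :: "nat \<Rightarrow> real"
  assumes step: "\<And>j. s \<le> j \<Longrightarrow> j < m \<Longrightarrow> a (Suc j) \<le> a j + c j" and "s \<le> m"
  shows "a m \<le> a s + (\<Sum>j\<in>{s..<m}. c j)"
proof -
  have "a m - a s = (\<Sum>j\<in>{s..<m}. a (Suc j) - a j)" using \<open>s \<le> m\<close> by (simp add: sum_Suc_diff')
  also have "\<dots> \<le> (\<Sum>j\<in>{s..<m}. c j)" using step by (intro sum_mono) (simp add: algebra_simps)
  finally show ?thesis by simp
qed

lemma abs_cross_le: "2 * (g * h * a) \<le> \<bar>a\<bar> * (g\<^sup>2 + h\<^sup>2)" for g h a :: real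
proof -
  have "2 * (g * h * a) \<le> \<bar>a\<bar> * (2 * \<bar>g * h\<bar>)"
    using abs_ge_self[of "a * (g * h)"] by (simp add: abs_mult mult_ac)
  also have "\<dots> \<le> \<bar>a\<bar> * (g\<^sup>2 + h\<^sup>2)"
    using sum_squares_bound[of "\<bar>g\<bar>" "\<bar>h\<bar>"] by (intro mult_left_mono) (simp_all add: abs_mult)
  finally show ?thesis .
qed

text \<open>With delays at most \<open>\<tau>\<close>, each index \<open>t\<close> lies in at most \<open>\<tau>\<close> of the windows \<open>[k j, j)\<close>.\<close>
lemma delayed_window_count:
  fixes g :: "nat \<Rightarrow> real"
  assumes delay: "\<And>j. j \<le> k j + \<tau>" and g: "\<And>t. 0 \<le> g t"
  shows "(\<Sum>j\<in>{s..<m}. \<Sum>t\<in>{t\<in>{s..<m}. t < j \<and> k j \<le> t}. g t) \<le> real \<tau> * (\<Sum>t\<in>{s..<m}. g t)"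
proof -
  have "(\<Sum>j\<in>{s..<m}. \<Sum>t\<in>{t\<in>{s..<m}. t < j \<and> k j \<le> t}. g t)
      = (\<Sum>t\<in>{s..<m}. \<Sum>j\<in>{j\<in>{s..<m}. t < j \<and> k j \<le> t}. g t)"
    by (rule sum.swap_restrict) auto
  also have "\<dots> = (\<Sum>t\<in>{s..<m}. real (card {j\<in>{s..<m}. t < j \<and> k j \<le> t}) * g t)"
    by simp
  also have "\<dots> \<le> (\<Sum>t\<in>{s..<m}. real \<tau> * g t)"
  proof (intro sum_mono mult_right_mono g)
    fix t
    have "{j\<in>{s..<m}. t < j \<and> k j \<le> t} \<subseteq> {t<..t + \<tau>}"
      by clarsimp (meson add_le_mono1 delay le_trans)
    then show "real (card {j\<in>{s..<m}. t < j \<and> k j \<le> t}) \<le> real \<tau>"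
      using card_mono[of "{t<..t + \<tau>}"] by fastforce
  qed
  finally show ?thesis by (simp add: sum_distrib_left)
qed

lemma delayed_pair_sum_le:
  fixes g :: "nat \<Rightarrow> real"
  assumes delay: "\<And>j. j \<le> k j + \<tau>" and g: "\<And>t. 0 \<le> g t"
  shows "(\<Sum>j\<in>{s..<m}. \<Sum>t\<in>{k j..<j}. g j + g t)
    \<le> 2 * real \<tau> * (\<Sum>j\<in>{s..<m}. g j) + (\<Sum>j\<in>{s..<m}. \<Sum>t\<in>{k j..<s}. g t)"
proof -
  let ?new = "\<lambda>j. {t\<in>{s..<m}. t < j \<and> k j \<le> t}"
  have split: "(\<Sum>t\<in>{k j..<j}. g j + g t)
      = real (card {k j..<j}) * g j + (\<Sum>t\<in>{k j..<s}. g t) + (\<Sum>t\<in>?new j. g t)"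
    if "j \<in> {s..<m}" for j
  proof -
    have "{k j..<j} = {k j..<s} \<union> ?new j" "{k j..<s} \<inter> ?new j = {}" using that by auto
    then show ?thesis by (simp add: sum.distrib sum.union_disjoint)
  qed
  have card: "(\<Sum>j\<in>{s..<m}. real (card {k j..<j}) * g j) \<le> real \<tau> * (\<Sum>j\<in>{s..<m}. g j)"
    unfolding sum_distrib_left
    using delay g by (intro sum_mono mult_right_mono) (simp_all add: le_diff_conv add.commute)
  have window: "(\<Sum>j\<in>{s..<m}. \<Sum>t\<in>?new j. g t) \<le> real \<tau> * (\<Sum>j\<in>{s..<m}. g j)"
    by (rule delayed_window_count[OF delay g])
  have "(\<Sum>j\<in>{s..<m}. \<Sum>t\<in>{k j..<j}. g j + g t)
      = (\<Sum>j\<in>{s..<m}. real (card {k j..<j}) * g j + (\<Sum>t\<in>{k j..<s}. g t) + (\<Sum>t\<in>?new j. g t))"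
    by (rule sum.cong[OF refl split])
  also have "\<dots> = (\<Sum>j\<in>{s..<m}. real (card {k j..<j}) * g j) + (\<Sum>j\<in>{s..<m}. \<Sum>t\<in>{k j..<s}. g t)
        + (\<Sum>j\<in>{s..<m}. \<Sum>t\<in>?new j. g t)"
    by (simp only: sum.distrib)
  also have "\<dots> \<le> 2 * real \<tau> * (\<Sum>j\<in>{s..<m}. g j) + (\<Sum>j\<in>{s..<m}. \<Sum>t\<in>{k j..<s}. g t)"
    using card window by linarith
  finally show ?thesis .
qed

lemma delayed_tail_sum_le:
  fixes g :: "nat \<Rightarrow> real"
  assumes delay: "\<And>j. j \<le> k j + \<tau>"
    and bound: "\<And>t. t < s \<Longrightarrow> s \<le> t + \<tau> \<Longrightarrow> g t \<le> C" and "0 \<le> C"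
  shows "(\<Sum>j\<in>{s..<m}. \<Sum>t\<in>{k j..<s}. g t) \<le> real \<tau> * real \<tau> * C"
proof -
  have "(\<Sum>j\<in>{s..<m}. \<Sum>t\<in>{k j..<s}. g t) \<le> (\<Sum>j\<in>{s..<m}. real (card {k j..<s}) * C)"
  proof (intro sum_mono)
    fix j assume "j \<in> {s..<m}"
    then have "g t \<le> C" if "t \<in> {k j..<s}" for t
      using that delay[of j] by (intro bound) auto
    then show "(\<Sum>t\<in>{k j..<s}. g t) \<le> real (card {k j..<s}) * C"
      using sum_mono[of "{k j..<s}" g "\<lambda>_. C"] by simp
  qed
  also have "\<dots> = (\<Sum>j\<in>{s..<m}. real (card {k j..<s})) * C" by (simp add: sum_distrib_right)
  also have "\<dots> \<le> real \<tau> * real \<tau> * C"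
  proof (rule mult_right_mono[OF _ \<open>0 \<le> C\<close>])
    have "(\<Sum>j\<in>{s..<m}. real (card {k j..<s})) \<le> (\<Sum>j\<in>{s..<m} \<union> {s..<s + \<tau>}. real (card {k j..<s}))"
      by (intro sum_mono2) auto
    also have "\<dots> = (\<Sum>j\<in>{s..<s + \<tau>}. real (card {k j..<s}))"
      using delay by (intro sum.mono_neutral_right) (auto simp: not_less, metis add_le_cancel_right le_trans)
    also have "\<dots> \<le> (\<Sum>j\<in>{s..<s + \<tau>}. real \<tau>)"
    proof (intro sum_mono)
      fix j assume "j \<in> {s..<s + \<tau>}"
      then show "real (card {k j..<s}) \<le> real \<tau>" using delay[of j] by auto
    qed
    finally show "(\<Sum>j\<in>{s..<m}. real (card {k j..<s})) \<le> real \<tau> * real \<tau>" by simp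
  qed
  finally show ?thesis .
qed

section \<open>The consistent-read iteration\<close>

locale async_iteration =
  fixes A :: "real^'n::finite^'n" and b x0 :: "real^'n" and \<beta> :: real and \<tau> :: nat
    and k :: "nat \<Rightarrow> nat" and X :: "(nat \<Rightarrow> 'n) \<Rightarrow> nat \<Rightarrow> real^'n"
  assumes card_ge_2: "2 \<le> CARD('n)"
    and spd: "sym_pos_def A" and unit_diag: "\<And>i. A $ i $ i = 1"
    and delay_le: "\<And>j. k j \<le> j" and delay_bound: "\<And>j. j \<le> k j + \<tau>"
    and X_0: "\<And>d. X d 0 = x0"
    and X_step: "\<And>d j. X d (Suc j) =
      X d j + (\<beta> * A_inner A (matrix_inv A *v b - X d (k j)) (basis_vec (d j))) *\<^sub>R basis_vec (d j)"
    and nu_positive: "0 < 2 * \<beta> - \<beta>\<^sup>2 - 2 * max_mean_abs_row A * real \<tau> * \<beta>\<^sup>2"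
begin

abbreviation rho :: real where "rho \<equiv> max_mean_abs_row A"

definition xstar :: "real^'n" where "xstar = matrix_inv A *v b"

definition gam :: "(nat \<Rightarrow> 'n) \<Rightarrow> nat \<Rightarrow> real" where
  "gam d j = A_inner A (xstar - X d (k j)) (basis_vec (d j))"

text \<open>All averages are over the first \<open>M\<close> directions for one fixed horizon \<open>M\<close>; for \<open>j \<le> M\<close>
  this is the expected error \<open>exp_err\<close> (lemma \<open>exp_err_eq_E\<close>).\<close>
definition E :: "nat \<Rightarrow> nat \<Rightarrow> real" where "E M j = avg M (\<lambda>d. A_norm2 A (X d j - xstar))"

definition G :: "nat \<Rightarrow> nat \<Rightarrow> real" where "G M j = avg M (\<lambda>d. (gam d j)\<^sup>2)"

definition q :: real where "q = 1 - lambda_max A / real CARD('n)"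

definition nu :: real where "nu = 2 * \<beta> - \<beta>\<^sup>2 - 2 * rho * real \<tau> * \<beta>\<^sup>2"

definition chi :: real where
  "chi = rho * (real \<tau>)\<^sup>2 * \<beta>\<^sup>2 * lambda_max A / q ^ (2 * \<tau>) / real CARD('n)"

definition contraction :: real where
  "contraction = 1 - nu * q ^ \<tau> * lambda_min A / (2 * lambda_max A) + chi"

lemma symmetric: "transpose A = A"
  using spd unfolding sym_pos_def_def by blast

lemma gam_eq: "gam d j = - (A *v (X d (k j) - xstar)) $ d j"
proof -
  have "A *v (- w) = - (A *v w)" for w
    by (simp add: vec_eq_iff matrix_vector_mult_def sum_negf)
  from this[of "X d (k j) - xstar"] have "A *v (xstar - X d (k j)) = - (A *v (X d (k j) - xstar))"
    by simp
  then show ?thesis by (simp add: gam_def A_inner_def basis_vec_def inner_axis')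
qed

lemma X_Suc: "X d (Suc j) = X d j + (\<beta> * gam d j) *\<^sub>R axis (d j) 1"
  by (simp add: X_step gam_def xstar_def basis_vec_def)

lemma X_prefix: "(\<And>l. l < i \<Longrightarrow> d l = d' l) \<Longrightarrow> X d i = X d' i"
proof (induction i rule: less_induct)
  case (less i)
  show ?case
  proof (cases i)
    case (Suc j)
    have "X d j = X d' j" using less.IH[of j] less.prems Suc by auto
    moreover have "X d (k j) = X d' (k j)" using less.IH[of "k j"] less.prems Suc delay_le[of j] by auto
    moreover have "d j = d' j" using less.prems Suc by simp
    ultimately show ?thesis using Suc by (simp add: X_Suc gam_def)
  qed (simp add: X_0)
qed

lemma X_fun_upd: "l \<le> j \<Longrightarrow> X (d(j := y)) l = X d l"
  by (rule X_prefix) simp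

lemma gam_fun_upd: "k j \<le> t \<Longrightarrow> t \<noteq> j \<Longrightarrow> gam (d(t := y)) j = gam d j"
  unfolding gam_def by (simp add: X_fun_upd)

lemma X_telescope: "a \<le> c \<Longrightarrow> X d c = X d a + (\<Sum>t\<in>{a..<c}. (\<beta> * gam d t) *\<^sub>R axis (d t) 1)"
proof (induction c)
  case (Suc c)
  then show ?case
    by (cases "a \<le> c") (simp_all add: X_Suc atLeastLessThanSuc algebra_simps le_Suc_eq)
qed simp

lemma err_Suc: "X d (Suc j) - xstar = (X d j - xstar) + (\<beta> * gam d j) *\<^sub>R axis (d j) 1"
  by (simp add: X_Suc algebra_simps)

lemma err_Suc_ge: "A_norm2 A (X d j - xstar) - ((A *v (X d j - xstar)) $ d j)\<^sup>2 \<le> A_norm2 A (X d (Suc j) - xstar)"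
  unfolding err_Suc by (rule A_norm2_add_axis_ge[OF symmetric unit_diag])

lemma residual_eq_delayed:
  "(A *v (X d j - xstar)) $ d j = - gam d j + \<beta> * (\<Sum>t\<in>{k j..<j}. gam d t * A $ d j $ d t)"
proof -
  let ?u = "\<Sum>t\<in>{k j..<j}. (\<beta> * gam d t) *\<^sub>R axis (d t) 1"
  have "X d j - xstar = (X d (k j) - xstar) + ?u"
    using X_telescope[OF delay_le[of j], of d] by (simp add: algebra_simps)
  then have "(A *v (X d j - xstar)) $ d j = (A *v (X d (k j) - xstar)) $ d j + (A *v ?u) $ d j"
    by (simp only: matrix_vector_right_distrib vector_add_component)
  also have "(A *v ?u) $ d j = \<beta> * (\<Sum>t\<in>{k j..<j}. gam d t * A $ d j $ d t)"
    by (simp add: vec.sum matrix_vector_mult_scaleR sum_component matrix_vector_mult_axis_component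
        sum_distrib_left mult.assoc)
  finally show ?thesis by (simp add: gam_eq[of d j])
qed

lemma err_Suc_le:
  "A_norm2 A (X d (Suc j) - xstar) \<le> A_norm2 A (X d j - xstar) - (2 * \<beta> - \<beta>\<^sup>2) * (gam d j)\<^sup>2
     + \<beta>\<^sup>2 * (\<Sum>t\<in>{k j..<j}. \<bar>A $ d j $ d t\<bar> * (gam d j)\<^sup>2 + \<bar>A $ d j $ d t\<bar> * (gam d t)\<^sup>2)"
proof -
  let ?g = "gam d j"
  have "A_norm2 A (X d (Suc j) - xstar)
      = A_norm2 A (X d j - xstar) - (2 * \<beta> - \<beta>\<^sup>2) * ?g\<^sup>2
        + \<beta>\<^sup>2 * (\<Sum>t\<in>{k j..<j}. 2 * (?g * gam d t * A $ d j $ d t))"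
    unfolding err_Suc A_norm2_add_axis[OF symmetric unit_diag] residual_eq_delayed
    by (simp add: power2_eq_square algebra_simps sum_distrib_left)
  also have "\<dots> \<le> A_norm2 A (X d j - xstar) - (2 * \<beta> - \<beta>\<^sup>2) * ?g\<^sup>2
        + \<beta>\<^sup>2 * (\<Sum>t\<in>{k j..<j}. \<bar>A $ d j $ d t\<bar> * (?g\<^sup>2 + (gam d t)\<^sup>2))"
    by (intro add_left_mono mult_left_mono sum_mono abs_cross_le) simp_all
  finally show ?thesis by (simp add: distrib_left)
qed

lemma q_pos: "0 < q"
  using lambda_max_less_card[OF spd unit_diag card_ge_2] by (simp add: q_def)

lemma q_less_1: "q < 1"
  using lambda_max_pos[OF spd] by (simp add: q_def)

lemma nu_pos: "0 < nu"
  using nu_positive by (simp add: nu_def)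

lemma E_nonneg: "0 \<le> E M j"
  unfolding E_def A_norm2_def A_inner_def by (intro avg_nonneg sym_pos_def_nonneg[OF spd])

lemma G_nonneg: "0 \<le> G M j"
  unfolding G_def by (intro avg_nonneg) simp

lemma E_Suc_ge:
  assumes "j < M"
  shows "q * E M j \<le> E M (Suc j)"
proof -
  let ?r = "\<lambda>d. A *v (X d j - xstar)"
  have "avg M (\<lambda>d. (?r d $ d j)\<^sup>2) = avg M (\<lambda>d. (?r d \<bullet> ?r d) / real CARD('n))"
    by (subst avg_resample[OF assms]) (simp add: X_fun_upd sum_component_power2)
  also have "\<dots> \<le> avg M (\<lambda>d. lambda_max A / real CARD('n) * A_norm2 A (X d j - xstar))"
    using inner_matrix_vector_le_lambda_max[OF spd]
    by (intro avg_mono) (simp add: A_norm2_def A_inner_def divide_right_mono)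
  also have "\<dots> = (1 - q) * E M j" unfolding avg_cmult by (simp add: E_def q_def)
  finally have "avg M (\<lambda>d. (?r d $ d j)\<^sup>2) \<le> (1 - q) * E M j" .
  moreover have "E M j - avg M (\<lambda>d. (?r d $ d j)\<^sup>2) \<le> E M (Suc j)"
    unfolding E_def avg_diff[symmetric] by (intro avg_mono err_Suc_ge)
  ultimately show ?thesis by (simp add: algebra_simps)
qed

text \<open>The direction \<open>d\<^sub>j\<close> is independent of the iterate read at \<open>k j\<close>.\<close>
lemma G_eq:
  assumes "j < M"
  shows "G M j = avg M (\<lambda>d. (A *v (X d (k j) - xstar)) \<bullet> (A *v (X d (k j) - xstar)) / real CARD('n))"
  unfolding G_def
  by (subst avg_resample[OF assms]) (simp add: gam_eq X_fun_upd[OF delay_le] sum_component_power2)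

lemma G_ge:
  assumes "j < M"
  shows "lambda_min A / real CARD('n) * E M (k j) \<le> G M j"
  unfolding G_eq[OF assms] E_def avg_cmult[symmetric]
  using lambda_min_le_inner_matrix_vector[OF spd]
  by (intro avg_mono) (simp add: A_norm2_def A_inner_def divide_right_mono)

lemma G_le:
  assumes "j < M"
  shows "G M j \<le> lambda_max A / real CARD('n) * E M (k j)"
  unfolding G_eq[OF assms] E_def avg_cmult[symmetric]
  using inner_matrix_vector_le_lambda_max[OF spd]
  by (intro avg_mono) (simp add: A_norm2_def A_inner_def divide_right_mono)

lemma cross_current_le:
  assumes "j < M" "t \<in> {k j..<j}"
  shows "avg M (\<lambda>d. \<bar>A $ d j $ d t\<bar> * (gam d j)\<^sup>2) \<le> rho * G M j"
  unfolding G_def using assms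
  by (intro avg_abs_entry_le[where r = "\<lambda>d. d j" and i = t and F = "\<lambda>d. (gam d j)\<^sup>2"])
    (auto simp: gam_fun_upd)

lemma cross_delayed_le:
  assumes "j < M" "t \<in> {k j..<j}"
  shows "avg M (\<lambda>d. \<bar>A $ d j $ d t\<bar> * (gam d t)\<^sup>2) \<le> rho * G M t"
  unfolding G_def symmetric_matrix_entry[OF symmetric, of _ "d t" for d] using assms delay_le[of t]
  by (intro avg_abs_entry_le[where r = "\<lambda>d. d t" and i = j and F = "\<lambda>d. (gam d t)\<^sup>2"])
    (auto simp: gam_fun_upd)

lemma E_Suc_le:
  assumes "j < M"
  shows "E M (Suc j) \<le> E M j - (2 * \<beta> - \<beta>\<^sup>2) * G M j + \<beta>\<^sup>2 * rho * (\<Sum>t\<in>{k j..<j}. G M j + G M t)"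
proof -
  have "E M (Suc j) \<le> E M j - (2 * \<beta> - \<beta>\<^sup>2) * G M j + \<beta>\<^sup>2 * (\<Sum>t\<in>{k j..<j}.
      avg M (\<lambda>d. \<bar>A $ d j $ d t\<bar> * (gam d j)\<^sup>2) + avg M (\<lambda>d. \<bar>A $ d j $ d t\<bar> * (gam d t)\<^sup>2))"
    unfolding E_def G_def avg_sum[symmetric] avg_add[symmetric] avg_cmult[symmetric] avg_diff[symmetric]
    by (intro avg_mono err_Suc_le)
  also have "\<dots> \<le> E M j - (2 * \<beta> - \<beta>\<^sup>2) * G M j + \<beta>\<^sup>2 * (\<Sum>t\<in>{k j..<j}. rho * G M j + rho * G M t)"
    using assms by (intro add_left_mono mult_left_mono sum_mono add_mono cross_current_le cross_delayed_le) auto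
  finally show ?thesis by (simp add: sum_distrib_left distrib_left mult.assoc)
qed

lemma E_window_le:
  assumes "s \<le> m" "m \<le> M"
  shows "E M m \<le> E M s - nu * (\<Sum>j\<in>{s..<m}. G M j) + \<beta>\<^sup>2 * rho * (\<Sum>j\<in>{s..<m}. \<Sum>t\<in>{k j..<s}. G M t)"
proof -
  have "E M m \<le> E M s + (\<Sum>j\<in>{s..<m}. - (2 * \<beta> - \<beta>\<^sup>2) * G M j + \<beta>\<^sup>2 * rho * (\<Sum>t\<in>{k j..<j}. G M j + G M t))"
  proof (rule telescope_le[OF _ assms(1)])
    fix j assume "s \<le> j" "j < m"
    then show "E M (Suc j) \<le> E M j + (- (2 * \<beta> - \<beta>\<^sup>2) * G M j + \<beta>\<^sup>2 * rho * (\<Sum>t\<in>{k j..<j}. G M j + G M t))"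
      using E_Suc_le[of j M] assms by linarith
  qed
  also have "\<dots> = E M s - (2 * \<beta> - \<beta>\<^sup>2) * (\<Sum>j\<in>{s..<m}. G M j)
      + \<beta>\<^sup>2 * rho * (\<Sum>j\<in>{s..<m}. \<Sum>t\<in>{k j..<j}. G M j + G M t)"
    by (simp only: sum.distrib sum_distrib_left[symmetric])
  also have "\<dots> \<le> E M s - (2 * \<beta> - \<beta>\<^sup>2) * (\<Sum>j\<in>{s..<m}. G M j)
      + \<beta>\<^sup>2 * rho * (2 * real \<tau> * (\<Sum>j\<in>{s..<m}. G M j) + (\<Sum>j\<in>{s..<m}. \<Sum>t\<in>{k j..<s}. G M t))"
    using max_mean_abs_row_nonneg[of A]
    by (intro add_left_mono mult_left_mono delayed_pair_sum_le delay_bound G_nonneg) auto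
  finally show ?thesis by (simp add: nu_def algebra_simps)
qed

lemma E_ge_power: "h \<le> i \<Longrightarrow> i \<le> M \<Longrightarrow> q ^ (i - h) * E M h \<le> E M i"
  by (rule power_growth_lower_bound) (use q_pos E_Suc_ge in auto)

lemma G_sum_ge:
  assumes "s \<le> a" and reads: "\<And>j. a \<le> j \<Longrightarrow> s \<le> k j" and "q ^ L \<le> 1/2" and "a + L \<le> M"
  shows "q ^ (a - s) * (lambda_min A / (2 * lambda_max A)) * E M s \<le> (\<Sum>j\<in>{a..<a + L}. G M j)"
proof -
  let ?c = "lambda_min A / real CARD('n) * E M s"
  have c_nonneg: "0 \<le> ?c" using lambda_min_pos[OF spd] E_nonneg by simp
  have "?c * q ^ (j - s) \<le> G M j" if j: "j \<in> {a..<a + L}" for j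
  proof -
    have "q ^ (j - s) * E M s \<le> q ^ (k j - s) * E M s"
      using delay_le[of j] q_pos q_less_1 E_nonneg by (intro mult_right_mono power_decreasing) auto
    also have "\<dots> \<le> E M (k j)" using reads[of j] j assms delay_le[of j] by (intro E_ge_power) auto
    finally have "lambda_min A / real CARD('n) * (q ^ (j - s) * E M s)
        \<le> lambda_min A / real CARD('n) * E M (k j)"
      using lambda_min_pos[OF spd] by (intro mult_left_mono) auto
    also have "\<dots> \<le> G M j" using j assms by (intro G_ge) auto
    finally show ?thesis by (simp add: mult_ac)
  qed
  then have "(\<Sum>j\<in>{a..<a + L}. ?c * q ^ (j - s)) \<le> (\<Sum>j\<in>{a..<a + L}. G M j)" by (rule sum_mono)
  moreover have "(\<Sum>j\<in>{a..<a + L}. ?c * q ^ (j - s)) = ?c * q ^ (a - s) * (\<Sum>i<L. q ^ i)"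
  proof -
    have "(\<Sum>j\<in>{a..<a + L}. ?c * q ^ (j - s)) = (\<Sum>i<L. ?c * q ^ (a + i - s))"
      by (simp add: sum.atLeastLessThan_shift_0[of _ a] atLeast0LessThan)
    also have "\<dots> = (\<Sum>i<L. ?c * q ^ (a - s) * q ^ i)"
    proof (rule sum.cong[OF refl])
      fix i
      have "a + i - s = (a - s) + i" using \<open>s \<le> a\<close> by simp
      then show "?c * q ^ (a + i - s) = ?c * q ^ (a - s) * q ^ i" by (simp only: power_add mult.assoc)
    qed
    finally show ?thesis by (simp add: sum_distrib_left)
  qed
  moreover have "?c * q ^ (a - s) * (real CARD('n) / (2 * lambda_max A)) \<le> ?c * q ^ (a - s) * (\<Sum>i<L. q ^ i)"
  proof (rule mult_left_mono)
    show "real CARD('n) / (2 * lambda_max A) \<le> (\<Sum>i<L. q ^ i)"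
      using geometric_sum_ge[OF q_less_1 assms(3)] by (simp add: q_def)
    show "0 \<le> ?c * q ^ (a - s)" using q_pos by (intro mult_nonneg_nonneg c_nonneg) simp
  qed
  ultimately show ?thesis by (simp add: mult_ac)
qed

lemma E_first_block:
  assumes "q ^ m \<le> 1/2" "m \<le> M"
  shows "E M m \<le> (1 - nu * lambda_min A / (2 * lambda_max A)) * E M 0"
proof -
  have "E M m \<le> E M 0 - nu * (\<Sum>j\<in>{0..<m}. G M j)"
    using E_window_le[of 0 m M] assms by simp
  moreover have "lambda_min A / (2 * lambda_max A) * E M 0 \<le> (\<Sum>j\<in>{0..<m}. G M j)"
    using G_sum_ge[of 0 0 m M] assms by simp
  then have "nu * (lambda_min A / (2 * lambda_max A) * E M 0) \<le> nu * (\<Sum>j\<in>{0..<m}. G M j)"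
    using nu_pos by (intro mult_left_mono) auto
  ultimately show ?thesis by (simp add: algebra_simps)
qed

lemma E_block_contraction:
  assumes "s + L + \<tau> \<le> m" "m \<le> M" "q ^ L \<le> 1/2"
  shows "E M m \<le> contraction * E M s"
proof -
  define C where "C = lambda_max A / real CARD('n) * E M s / q ^ (2 * \<tau>)"
  have "q ^ \<tau> * (lambda_min A / (2 * lambda_max A)) * E M s
      = q ^ (s + \<tau> - s) * (lambda_min A / (2 * lambda_max A)) * E M s" by simp
  also have "\<dots> \<le> (\<Sum>j\<in>{s + \<tau>..<s + \<tau> + (m - s - \<tau>)}. G M j)"
  proof (rule G_sum_ge)
    have "q ^ (m - s - \<tau>) \<le> q ^ L" using assms q_pos q_less_1 by (intro power_decreasing) auto
    then show "q ^ (m - s - \<tau>) \<le> 1/2" using assms by simp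
  qed (use assms delay_bound in \<open>auto intro: add_le_imp_le_right order_trans\<close>)
  also have "\<dots> \<le> (\<Sum>j\<in>{s..<m}. G M j)" by (intro sum_mono2) (auto simp: G_nonneg)
  finally have lower: "nu * (q ^ \<tau> * (lambda_min A / (2 * lambda_max A)) * E M s) \<le> nu * (\<Sum>j\<in>{s..<m}. G M j)"
    using nu_pos by (intro mult_left_mono) auto
  have "(\<Sum>j\<in>{s..<m}. \<Sum>t\<in>{k j..<s}. G M t) \<le> real \<tau> * real \<tau> * C"
  proof (rule delayed_tail_sum_le[OF delay_bound])
    fix t assume t: "t < s" "s \<le> t + \<tau>"
    have "q ^ (2 * \<tau>) * E M (k t) \<le> q ^ (s - k t) * E M (k t)"
      using t delay_bound[of t] q_pos q_less_1 E_nonneg by (intro mult_right_mono power_decreasing) auto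
    also have "\<dots> \<le> E M s" using t assms delay_le[of t] by (intro E_ge_power) auto
    finally have "E M (k t) \<le> E M s / q ^ (2 * \<tau>)" using q_pos by (simp add: field_simps)
    have "G M t \<le> lambda_max A / real CARD('n) * E M (k t)" using t assms by (intro G_le) auto
    also have "\<dots> \<le> lambda_max A / real CARD('n) * (E M s / q ^ (2 * \<tau>))"
      using \<open>E M (k t) \<le> E M s / q ^ (2 * \<tau>)\<close> lambda_max_pos[OF spd] by (intro mult_left_mono) auto
    finally show "G M t \<le> C" by (simp add: C_def)
  next
    show "0 \<le> C" unfolding C_def using lambda_max_pos[OF spd] E_nonneg q_pos by simp
  qed
  then have "\<beta>\<^sup>2 * rho * (\<Sum>j\<in>{s..<m}. \<Sum>t\<in>{k j..<s}. G M t) \<le> \<beta>\<^sup>2 * rho * (real \<tau> * real \<tau> * C)"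
    using max_mean_abs_row_nonneg[of A] by (intro mult_left_mono) auto
  with E_window_le[of s m M] lower assms
  have "E M m \<le> E M s - nu * (q ^ \<tau> * (lambda_min A / (2 * lambda_max A)) * E M s)
      + \<beta>\<^sup>2 * rho * (real \<tau> * real \<tau> * C)"
    by linarith
  also have "\<dots> = contraction * E M s"
    unfolding contraction_def chi_def C_def by (simp add: power2_eq_square algebra_simps)
  finally show ?thesis .
qed

lemma contraction_pos: "0 < contraction"
proof -
  have "0 \<le> 2 * rho * real \<tau> * \<beta>\<^sup>2" using max_mean_abs_row_nonneg[of A] by simp
  moreover have "2 * \<beta> - \<beta>\<^sup>2 \<le> 1" using zero_le_power2[of "1 - \<beta>"] by (simp add: power2_eq_square algebra_simps)
  ultimately have "nu \<le> 1" unfolding nu_def by linarith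
  moreover have "q ^ \<tau> \<le> 1" using q_pos q_less_1 by (simp add: power_le_one)
  moreover have "lambda_min A / lambda_max A \<le> 1"
    using lambda_min_le_lambda_max[OF symmetric] lambda_max_pos[OF spd] by simp
  ultimately have "nu * q ^ \<tau> * (lambda_min A / lambda_max A) \<le> 1 * 1 * 1"
    using nu_pos q_pos lambda_min_pos[OF spd] lambda_max_pos[OF spd] by (intro mult_mono) auto
  moreover have "0 \<le> chi"
    unfolding chi_def using max_mean_abs_row_nonneg[of A] q_pos lambda_max_pos[OF spd] by simp
  ultimately show ?thesis by (simp add: contraction_def)
qed

lemma E_blocks:
  assumes "q ^ L \<le> 1/2"
  shows "1 \<le> r \<Longrightarrow> r * (L + \<tau>) \<le> m \<Longrightarrow> m \<le> M \<Longrightarrow>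
    E M m \<le> (1 - nu * lambda_min A / (2 * lambda_max A)) * contraction ^ (r - 1) * E M 0"
proof (induction r arbitrary: m)
  case (Suc r)
  show ?case
  proof (cases "r = 0")
    case True
    then have "q ^ m \<le> q ^ L" using Suc.prems q_pos q_less_1 by (intro power_decreasing) auto
    then show ?thesis using E_first_block[of m M] Suc.prems True assms by simp
  next
    case False
    define s where "s = m - (L + \<tau>)"
    have "E M m \<le> contraction * E M s"
      using Suc.prems False assms by (intro E_block_contraction) (auto simp: s_def)
    also have "\<dots> \<le> contraction * ((1 - nu * lambda_min A / (2 * lambda_max A)) * contraction ^ (r - 1) * E M 0)"
      using Suc False contraction_pos by (intro mult_left_mono Suc.IH) (auto simp: s_def)
    also have "\<dots> = (1 - nu * lambda_min A / (2 * lambda_max A)) * contraction ^ (Suc r - 1) * E M 0"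
      using False by (cases r) (simp_all add: algebra_simps)
    finally show ?thesis .
  qed
qed simp

lemma exp_err_eq_E: "m \<le> M \<Longrightarrow> exp_err A xstar X m = E M m"
  unfolding exp_err_def E_def
  by (intro expectation_Pi_pmf_eq_avg) (auto intro: arg_cong[where f = "\<lambda>x. A_norm2 A (x - xstar)"] X_prefix)

lemma nu_over_kappa: "nu * c / (2 * (lambda_max A / lambda_min A)) = nu * c * lambda_min A / (2 * lambda_max A)"
  using lambda_min_pos[OF spd] lambda_max_pos[OF spd] by (simp add: field_simps)

lemma exp_err_first_block:
  assumes "ln (1/2) / ln q \<le> real m"
  shows "exp_err A xstar X m \<le> (1 - nu / (2 * (lambda_max A / lambda_min A))) * exp_err A xstar X 0"
  using E_first_block[OF power_le_half_of_ln[OF q_pos q_less_1 assms] order.refl]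
    exp_err_eq_E[of m m] exp_err_eq_E[of 0 m] nu_over_kappa[of 1]
  by simp

lemma exp_err_blocks:
  assumes "1 \<le> r" "r * (nat \<lceil>ln (1/2) / ln q\<rceil> + \<tau>) \<le> m"
  shows "exp_err A xstar X m \<le> (1 - nu / (2 * (lambda_max A / lambda_min A)))
    * (1 - nu * q ^ \<tau> / (2 * (lambda_max A / lambda_min A)) + chi) ^ (r - 1) * exp_err A xstar X 0"
proof -
  have "q ^ nat \<lceil>ln (1/2) / ln q\<rceil> \<le> 1/2"
    by (rule power_le_half_of_ln[OF q_pos q_less_1]) (rule real_nat_ceiling_ge)
  from E_blocks[OF this assms order.refl] show ?thesis
    using exp_err_eq_E[of m m] exp_err_eq_E[of 0 m] nu_over_kappa[of 1] nu_over_kappa[of "q ^ \<tau>"]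
    by (simp add: contraction_def)
qed

end

theorem theorem2:
  fixes A :: "real^'n::finite^'n" and b x0 :: "real^'n"
    and \<beta> :: real and \<tau> :: nat and k :: "nat \<Rightarrow> nat"
    and X :: "(nat \<Rightarrow> 'n) \<Rightarrow> nat \<Rightarrow> real^'n"
  assumes n2: "CARD('n) \<ge> 2"
    and spd: "sym_pos_def A"
    and diag: "\<forall>i. A $ i $ i = 1"
    and beta: "0 < \<beta>" "\<beta> \<le> 1"
    and delay: "\<forall>j. k j \<le> j \<and> j \<le> k j + \<tau>"
    and X0: "\<forall>d. X d 0 = x0"
    and Xstep: "\<forall>d j. X d (Suc j) =
        X d j + (\<beta> * A_inner A (matrix_inv A *v b - X d (k j)) (basis_vec (d j))) *\<^sub>R basis_vec (d j)"
    and nu_pos: "2 * \<beta> - \<beta>^2 - 2 * Max (range (\<lambda>l. (\<Sum>r\<in>UNIV. \<bar>A $ l $ r\<bar>) / real CARD('n))) * real \<tau> * \<beta>^2 > 0"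
  shows
   "let n = real CARD('n); xs = matrix_inv A *v b; E = exp_err A xs X;
        lmax = lambda_max A; \<kappa> = lambda_max A / lambda_min A;
        \<rho> = Max (range (\<lambda>l. (\<Sum>r\<in>UNIV. \<bar>A $ l $ r\<bar>) / n));
        \<nu> = 2 * \<beta> - \<beta>^2 - 2 * \<rho> * real \<tau> * \<beta>^2;
        q = 1 - lmax / n;
        T0 = nat \<lceil>ln (1/2) / ln q\<rceil>; T = T0 + \<tau>;
        chi = \<rho> * real \<tau>^2 * \<beta>^2 * lmax / q ^ (2 * \<tau>) / n
    in (\<forall>m::nat. real m \<ge> ln (1/2) / ln q \<longrightarrow> E m \<le> (1 - \<nu> / (2 * \<kappa>)) * E 0)
     \<and> (\<forall>r m::nat. r \<ge> 1 \<longrightarrow> m \<ge> r * T \<longrightarrow>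
          E m \<le> (1 - \<nu> / (2 * \<kappa>)) * (1 - \<nu> * q ^ \<tau> / (2 * \<kappa>) + chi) ^ (r - 1) * E 0)"
proof -
  interpret async_iteration A b x0 \<beta> \<tau> k X
    by unfold_locales (use assms in \<open>auto simp: max_mean_abs_row_def\<close>)
  show ?thesis
    using exp_err_first_block exp_err_blocks
    unfolding Let_def xstar_def q_def nu_def chi_def max_mean_abs_row_def by blast
qed

end
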